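(* Let $(X_1,Y_1),\dots,(X_{n+1},Y_{n+1})$ be data with risks $L_i=\mathcal{L}(f,X_i,Y_i)\in[0,1]$ (the value $L_{n+1}$ is not used), $s:\mathcal{X}\to[0,1]$ a score, $\alpha,\gamma\in(0,1)$, and $E_{\gamma,n+1}$ as defined below. If $\gamma\le\alpha$, then $$\mathbf{1}\{E_{\gamma,n+1}\ge 1/\alpha\}=\mathbf{1}\Big\{\frac{1+\sum_{i=1}^n L_i\mathbf{1}\{s(X_i)\le s(X_{n+1})\}}{n+1}\le\gamma\Big\}.$$ If $\gamma>\alpha$, then $E_{\gamma,n+1}\ge1/\alpha$ holds if and only if both $\frac{1+\sum_{i=1}^n L_i\mathbf{1}\{s(X_i)\le s(X_{n+1})\}}{n+1}\le\gamma$ and, for all $t\in\mathcal{M}$ and all $\ell\in[0,1]$, $\frac{\ell+\sum_{i=1}^n L_i\mathbf{1}\{s(X_i)\le t\}}{n+1}\notin(\alpha,\gamma]$.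
   Context: Let $\mathcal{M}=\{s(X_i)\}_{i=1}^{n+1}$. For $t\in\mathbb{R}$, $\ell\in[0,1]$, define $F(t;\ell)=\frac{1}{n+1}\big(\sum_{i=1}^n L_i\mathbf{1}\{s(X_i)\le t\}+\ell\,\mathbf{1}\{s(X_{n+1})\le t\}\big)$ and $t_\gamma(\ell)=\max\{t\in\mathcal{M}:F(t;\ell)\le\gamma\}$ with $\max\emptyset=-\infty$. Define $$E_{\gamma,n+1}=\inf_{\ell\in[0,1]}\frac{(n+1)\mathbf{1}\{s(X_{n+1})\le t_\gamma(\ell)\}}{\sum_{i=1}^n L_i\mathbf{1}\{s(X_i)\le t_\gamma(\ell)\}+\ell\,\mathbf{1}\{s(X_{n+1})\le t_\gamma(\ell)\}},$$ where each ratio is $0$ when its numerator is $0$ and $+\infty$ when its numerator is positive and its denominator is $0$; and $E_{\gamma,n+1}=0$ if $\inf_{\ell}t_\gamma(\ell)=-\infty$. *)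

theory Defs
  imports "HOL-Analysis.Analysis"
begin

(* Scores are passed as sc i = s (X i), indices 1..n+1. *)

definition scoreset :: "nat \<Rightarrow> (nat \<Rightarrow> real) \<Rightarrow> real set" where
  "scoreset n sc = sc ` {1..n+1}"

definition Fcal :: "nat \<Rightarrow> (nat \<Rightarrow> real) \<Rightarrow> (nat \<Rightarrow> real) \<Rightarrow> real \<Rightarrow> real \<Rightarrow> real" where
  "Fcal n L sc t l =
     ((\<Sum>i=1..n. L i * (if sc i \<le> t then 1 else 0)) + l * (if sc (n+1) \<le> t then 1 else 0))
     / (real n + 1)"

definition tgamma :: "nat \<Rightarrow> (nat \<Rightarrow> real) \<Rightarrow> (nat \<Rightarrow> real) \<Rightarrow> real \<Rightarrow> real \<Rightarrow> ereal" where
  "tgamma n L sc \<gamma> l =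
     (let A = {t \<in> scoreset n sc. Fcal n L sc t l \<le> \<gamma>}
      in if A = {} then -\<infinity> else ereal (Max A))"

definition eratio :: "nat \<Rightarrow> (nat \<Rightarrow> real) \<Rightarrow> (nat \<Rightarrow> real) \<Rightarrow> ereal \<Rightarrow> real \<Rightarrow> ereal" where
  "eratio n L sc t l =
     (let num = (real n + 1) * (if ereal (sc (n+1)) \<le> t then 1 else 0);
          den = (\<Sum>i=1..n. L i * (if ereal (sc i) \<le> t then 1 else 0))
                + l * (if ereal (sc (n+1)) \<le> t then 1 else 0)
      in if num = 0 then 0 else if den = 0 then \<infinity> else ereal (num / den))"

definition Egamma :: "nat \<Rightarrow> (nat \<Rightarrow> real) \<Rightarrow> (nat \<Rightarrow> real) \<Rightarrow> real \<Rightarrow> ereal" where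
  "Egamma n L sc \<gamma> =
     (if (INF l\<in>{0..1}. tgamma n L sc \<gamma> l) = -\<infinity> then 0
      else (INF l\<in>{0..1}. eratio n L sc (tgamma n L sc \<gamma> l) l))"

end

theory Submission imports Defs begin

text \<open>Write \<open>s\<^sub>0\<close> for the test score and \<open>R(t)\<close> for the calibration risk \<open>\<Sum> L\<^sub>i 1{s(X\<^sub>i) \<le> t}\<close>.
  As \<open>F(t;\<ell>)\<close> is nondecreasing in \<open>t\<close>, either \<open>t\<^sub>\<gamma>(\<ell>) < s\<^sub>0\<close> and the ratio at \<open>\<ell>\<close> is \<open>0\<close>, or
  \<open>F(s\<^sub>0;\<ell>) \<le> \<gamma>\<close> and the ratio is \<open>1/F(t\<^sub>\<gamma>(\<ell>);\<ell>)\<close>.  Hence \<open>E \<ge> 1/\<alpha>\<close> iff for every \<open>\<ell>\<close> both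
  \<open>F(s\<^sub>0;\<ell>) \<le> \<gamma>\<close> (hardest at \<open>\<ell> = 1\<close>) and \<open>F(t\<^sub>\<gamma>(\<ell>);\<ell>) \<le> \<alpha>\<close>.  Since \<open>t\<^sub>\<gamma>(\<ell>)\<close> is the largest
  score with \<open>F \<le> \<gamma>\<close>, and \<open>(\<ell> + R(t))/(n+1) \<le> F(t\<^sub>\<gamma>(\<ell>);\<ell>)\<close> for all scores \<open>t \<le> t\<^sub>\<gamma>(\<ell>)\<close>,
  the latter fails exactly when some score \<open>t\<close> puts \<open>(\<ell> + R(t))/(n+1)\<close> into \<open>(\<alpha>,\<gamma>]\<close>, an
  interval that is empty when \<open>\<gamma> \<le> \<alpha>\<close>.\<close>

definition risk_below :: "nat \<Rightarrow> (nat \<Rightarrow> real) \<Rightarrow> (nat \<Rightarrow> real) \<Rightarrow> real \<Rightarrow> real" where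
  "risk_below n L sc t = (\<Sum>i=1..n. L i * (if sc i \<le> t then 1 else 0))"

lemma risk_below_mono:
  assumes "\<forall>i\<in>{1..n}. 0 \<le> L i" and "t \<le> t'"
  shows "risk_below n L sc t \<le> risk_below n L sc t'"
  unfolding risk_below_def by (rule sum_mono) (use assms in auto)

lemma Fcal_eq_risk_below:
  "Fcal n L sc t l = (risk_below n L sc t + (if sc (n+1) \<le> t then l else 0)) / (real n + 1)"
  unfolding Fcal_def risk_below_def by simp

lemma Fcal_mono:
  assumes "\<forall>i\<in>{1..n}. 0 \<le> L i" and "0 \<le> l" and "t \<le> t'"
  shows "Fcal n L sc t l \<le> Fcal n L sc t' l"
  using risk_below_mono[OF assms(1,3), of sc] assms(2,3)
  unfolding Fcal_eq_risk_below by (intro divide_right_mono) auto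

lemma shifted_risk_below_le_Fcal:
  assumes "\<forall>i\<in>{1..n}. 0 \<le> L i" and "t \<le> t'" and "sc (n+1) \<le> t'"
  shows "(l + risk_below n L sc t) / (real n + 1) \<le> Fcal n L sc t' l"
  using risk_below_mono[OF assms(1,2), of sc] assms(3)
  unfolding Fcal_eq_risk_below by (intro divide_right_mono) auto

lemma tgamma_neq_PInf [simp]: "tgamma n L sc \<gamma> l \<noteq> \<infinity>"
  unfolding tgamma_def Let_def by simp

lemma tgamma_eq_Max:
  assumes "t \<in> scoreset n sc" and "Fcal n L sc t l \<le> \<gamma>"
  shows "tgamma n L sc \<gamma> l = ereal (Max {t \<in> scoreset n sc. Fcal n L sc t l \<le> \<gamma>})"
  using assms unfolding tgamma_def Let_def by auto

lemma finite_scoreset [simp]: "finite (scoreset n sc)"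
  unfolding scoreset_def by simp

lemma tgamma_maximal:
  assumes "t \<in> scoreset n sc" and "Fcal n L sc t l \<le> \<gamma>"
  obtains tm where "tgamma n L sc \<gamma> l = ereal tm" and "tm \<in> scoreset n sc"
    and "Fcal n L sc tm l \<le> \<gamma>" and "t \<le> tm"
    and "\<And>t'. t' \<in> scoreset n sc \<Longrightarrow> Fcal n L sc t' l \<le> \<gamma> \<Longrightarrow> t' \<le> tm"
proof -
  let ?A = "{t \<in> scoreset n sc. Fcal n L sc t l \<le> \<gamma>}"
  have "Max ?A \<in> ?A" using assms by (intro Max_in) auto
  then show ?thesis
    using that[OF tgamma_eq_Max[OF assms]] assms by simp
qed

lemma ereal_le_tgammaE:
  assumes "ereal u \<le> tgamma n L sc \<gamma> l"
  obtains t where "t \<in> scoreset n sc" and "u \<le> t" and "Fcal n L sc t l \<le> \<gamma>"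
proof -
  obtain t where "t \<in> scoreset n sc" and "Fcal n L sc t l \<le> \<gamma>"
    using assms unfolding tgamma_def Let_def by (auto split: if_splits)
  then obtain tm where "tgamma n L sc \<gamma> l = ereal tm" "tm \<in> scoreset n sc" "Fcal n L sc tm l \<le> \<gamma>"
    by (rule tgamma_maximal)
  then show ?thesis
    using assms that by simp
qed

lemma score_le_tgamma_iff:
  assumes "\<forall>i\<in>{1..n}. 0 \<le> L i" and "0 \<le> l"
  shows "ereal (sc (n+1)) \<le> tgamma n L sc \<gamma> l \<longleftrightarrow> Fcal n L sc (sc (n+1)) l \<le> \<gamma>"
proof
  assume "ereal (sc (n+1)) \<le> tgamma n L sc \<gamma> l"
  then obtain t where "sc (n+1) \<le> t" and "Fcal n L sc t l \<le> \<gamma>"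
    by (rule ereal_le_tgammaE)
  then show "Fcal n L sc (sc (n+1)) l \<le> \<gamma>"
    using Fcal_mono[OF assms] by (meson order_trans)
next
  assume F: "Fcal n L sc (sc (n+1)) l \<le> \<gamma>"
  have "sc (n+1) \<in> scoreset n sc" unfolding scoreset_def by simp
  then show "ereal (sc (n+1)) \<le> tgamma n L sc \<gamma> l"
    using F by (rule tgamma_maximal) simp
qed

lemma eratio_eq_0:
  assumes "\<not> ereal (sc (n+1)) \<le> t"
  shows "eratio n L sc t l = 0"
  using assms unfolding eratio_def Let_def by simp

lemma inverse_le_eratio_iff:
  assumes "\<forall>i\<in>{1..n}. 0 \<le> L i" and "0 \<le> l" and "sc (n+1) \<le> t" and "0 < \<alpha>"
  shows "ereal (1/\<alpha>) \<le> eratio n L sc (ereal t) l \<longleftrightarrow> Fcal n L sc t l \<le> \<alpha>"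
proof -
  define den where "den = risk_below n L sc t + l"
  have F: "Fcal n L sc t l = den / (real n + 1)"
    unfolding Fcal_eq_risk_below den_def using assms(3) by simp
  have E: "eratio n L sc (ereal t) l = (if den = 0 then \<infinity> else ereal ((real n + 1) / den))"
    unfolding eratio_def Let_def den_def risk_below_def using assms(3) by simp
  have "0 \<le> den"
    unfolding den_def risk_below_def using assms(1,2) by (auto intro!: sum_nonneg add_nonneg_nonneg)
  then show ?thesis
    using assms(4) unfolding E F by (auto simp: field_simps)
qed

lemma inverse_le_Egamma_iff:
  assumes "\<forall>i\<in>{1..n}. 0 \<le> L i" and "0 < \<alpha>"
  shows "ereal (1/\<alpha>) \<le> Egamma n L sc \<gamma> \<longleftrightarrow>
    (\<forall>l\<in>{0..1}. \<exists>t. tgamma n L sc \<gamma> l = ereal t \<and> sc (n+1) \<le> t \<and> Fcal n L sc t l \<le> \<alpha>)"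
    (is "_ \<longleftrightarrow> (\<forall>l\<in>{0..1}. ?good l)")
proof
  assume E: "ereal (1/\<alpha>) \<le> Egamma n L sc \<gamma>"
  have "(INF l\<in>{0..1}. tgamma n L sc \<gamma> l) \<noteq> -\<infinity>"
    using E assms(2) unfolding Egamma_def by (auto split: if_splits)
  then have ratio: "ereal (1/\<alpha>) \<le> eratio n L sc (tgamma n L sc \<gamma> l) l" if "l \<in> {0..1}" for l
    using E INF_lower[OF that, of "\<lambda>l. eratio n L sc (tgamma n L sc \<gamma> l) l"]
    unfolding Egamma_def by simp
  show "\<forall>l\<in>{0..1}. ?good l"
  proof
    fix l :: real assume l: "l \<in> {0..1}"
    have "ereal (sc (n+1)) \<le> tgamma n L sc \<gamma> l"
      using ratio[OF l] eratio_eq_0 assms(2) by force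
    then obtain t where "tgamma n L sc \<gamma> l = ereal t" and "sc (n+1) \<le> t"
      by (cases "tgamma n L sc \<gamma> l") auto
    then show "?good l"
      using ratio[OF l] inverse_le_eratio_iff[OF assms(1) _ _ assms(2)] l by auto
  qed
next
  assume good: "\<forall>l\<in>{0..1}. ?good l"
  have "ereal (sc (n+1)) \<le> (INF l\<in>{0..1}. tgamma n L sc \<gamma> l)"
    by (rule INF_greatest) (use good in force)
  then have "Egamma n L sc \<gamma> = (INF l\<in>{0..1}. eratio n L sc (tgamma n L sc \<gamma> l) l)"
    unfolding Egamma_def by auto
  also have "ereal (1/\<alpha>) \<le> \<dots>"
    by (rule INF_greatest) (use good inverse_le_eratio_iff[OF assms(1) _ _ assms(2)] in force)
  finally show "ereal (1/\<alpha>) \<le> Egamma n L sc \<gamma>" .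
qed

lemma tgamma_level_iff_no_gap:
  assumes L: "\<forall>i\<in>{1..n}. 0 \<le> L i" and l: "0 \<le> l"
  shows "(\<exists>t. tgamma n L sc \<gamma> l = ereal t \<and> sc (n+1) \<le> t \<and> Fcal n L sc t l \<le> \<alpha>) \<longleftrightarrow>
    Fcal n L sc (sc (n+1)) l \<le> \<gamma> \<and>
    (\<forall>t\<in>scoreset n sc. \<not> (\<alpha> < (l + risk_below n L sc t) / (real n + 1)
                              \<and> (l + risk_below n L sc t) / (real n + 1) \<le> \<gamma>))"
proof (cases "Fcal n L sc (sc (n+1)) l \<le> \<gamma>")
  case F: True
  have "sc (n+1) \<in> scoreset n sc" unfolding scoreset_def by simp
  then obtain tm where tm: "tgamma n L sc \<gamma> l = ereal tm" "tm \<in> scoreset n sc"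
    "Fcal n L sc tm l \<le> \<gamma>" and s0_tm: "sc (n+1) \<le> tm"
    and tm_max: "\<And>t'. t' \<in> scoreset n sc \<Longrightarrow> Fcal n L sc t' l \<le> \<gamma> \<Longrightarrow> t' \<le> tm"
    using F by (rule tgamma_maximal) blast
  have F_tm: "Fcal n L sc tm l = (l + risk_below n L sc tm) / (real n + 1)"
    using s0_tm unfolding Fcal_eq_risk_below by (simp add: add.commute)
  have below_tm: "(l + risk_below n L sc t) / (real n + 1) \<le> Fcal n L sc tm l"
    if "t \<in> scoreset n sc" "(l + risk_below n L sc t) / (real n + 1) \<le> \<gamma>" for t
  proof -
    have t_tm: "t \<le> tm"
    proof (cases "sc (n+1) \<le> t")
      case True
      then show ?thesis
        using that tm_max unfolding Fcal_eq_risk_below by (simp add: add.commute)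
    qed (use s0_tm in simp)
    show ?thesis using shifted_risk_below_le_Fcal[where sc = sc, OF L t_tm s0_tm] .
  qed
  have "(\<forall>t\<in>scoreset n sc. \<not> (\<alpha> < (l + risk_below n L sc t) / (real n + 1)
                                \<and> (l + risk_below n L sc t) / (real n + 1) \<le> \<gamma>))
        \<longleftrightarrow> Fcal n L sc tm l \<le> \<alpha>"
  proof
    assume "\<forall>t\<in>scoreset n sc. \<not> (\<alpha> < (l + risk_below n L sc t) / (real n + 1)
                                \<and> (l + risk_below n L sc t) / (real n + 1) \<le> \<gamma>)"
    then show "Fcal n L sc tm l \<le> \<alpha>"
      using tm(2,3) F_tm by fastforce
  next
    assume "Fcal n L sc tm l \<le> \<alpha>"
    then show "\<forall>t\<in>scoreset n sc. \<not> (\<alpha> < (l + risk_below n L sc t) / (real n + 1)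
                                \<and> (l + risk_below n L sc t) / (real n + 1) \<le> \<gamma>)"
      using below_tm by fastforce
  qed
  then show ?thesis
    using F tm(1) s0_tm by auto
next
  case False
  then show ?thesis
    using score_le_tgamma_iff[OF L l, of sc \<gamma>] by auto
qed

lemma scores_below_level_iff:
  assumes "\<forall>i\<in>{1..n}. 0 \<le> L i"
  shows "(\<forall>l\<in>{0..1}. Fcal n L sc (sc (n+1)) l \<le> \<gamma>) \<longleftrightarrow>
    (1 + risk_below n L sc (sc (n+1))) / (real n + 1) \<le> \<gamma>"
proof -
  let ?r = "risk_below n L sc (sc (n+1))"
  have F: "Fcal n L sc (sc (n+1)) l = (?r + l) / (real n + 1)" for l
    unfolding Fcal_eq_risk_below by simp
  have "(?r + l) / (real n + 1) \<le> (?r + 1) / (real n + 1)" if "l \<le> 1" for l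
    using that by (intro divide_right_mono) auto
  then have "(\<forall>l\<in>{0..1}. (?r + l) / (real n + 1) \<le> \<gamma>) \<longleftrightarrow> (?r + 1) / (real n + 1) \<le> \<gamma>"
    by (meson atLeastAtMost_iff order_refl order_trans zero_le_one)
  then show ?thesis
    unfolding F by (simp add: add.commute)
qed

lemma inverse_le_Egamma_iff_no_gap:
  assumes L: "\<forall>i\<in>{1..n}. 0 \<le> L i" and "0 < \<alpha>"
  shows "ereal (1/\<alpha>) \<le> Egamma n L sc \<gamma> \<longleftrightarrow>
    (1 + risk_below n L sc (sc (n+1))) / (real n + 1) \<le> \<gamma> \<and>
    (\<forall>t\<in>scoreset n sc. \<forall>l\<in>{0..1}. \<not> (\<alpha> < (l + risk_below n L sc t) / (real n + 1)
                                       \<and> (l + risk_below n L sc t) / (real n + 1) \<le> \<gamma>))"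
  unfolding inverse_le_Egamma_iff[OF assms] scores_below_level_iff[OF L, symmetric]
  using tgamma_level_iff_no_gap[OF L] by auto

theorem proposition4p1:
  fixes n :: nat and X :: "nat \<Rightarrow> 'x" and L :: "nat \<Rightarrow> real" and s :: "'x \<Rightarrow> real"
    and \<alpha> \<gamma> :: real
  assumes L_range: "\<forall>i\<in>{1..n+1}. 0 \<le> L i \<and> L i \<le> 1"
    and s_range: "\<forall>x. 0 \<le> s x \<and> s x \<le> 1"
    and alpha: "0 < \<alpha>" "\<alpha> < 1"
    and gamma: "0 < \<gamma>" "\<gamma> < 1"
  shows "(\<gamma> \<le> \<alpha> \<longrightarrow>
           (ereal (1/\<alpha>) \<le> Egamma n L (\<lambda>i. s (X i)) \<gamma> \<longleftrightarrow>
            (1 + (\<Sum>i=1..n. L i * (if s (X i) \<le> s (X (n+1)) then 1 else 0))) / (real n + 1) \<le> \<gamma>))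
       \<and> (\<alpha> < \<gamma> \<longrightarrow>
           (ereal (1/\<alpha>) \<le> Egamma n L (\<lambda>i. s (X i)) \<gamma> \<longleftrightarrow>
            ((1 + (\<Sum>i=1..n. L i * (if s (X i) \<le> s (X (n+1)) then 1 else 0))) / (real n + 1) \<le> \<gamma>
             \<and> (\<forall>t\<in>scoreset n (\<lambda>i. s (X i)). \<forall>l\<in>{0..1::real}.
                  \<not> (\<alpha> < (l + (\<Sum>i=1..n. L i * (if s (X i) \<le> t then 1 else 0))) / (real n + 1)
                       \<and> (l + (\<Sum>i=1..n. L i * (if s (X i) \<le> t then 1 else 0))) / (real n + 1) \<le> \<gamma>)))))"
proof -
  have L: "\<forall>i\<in>{1..n}. 0 \<le> L i" using L_range by auto
  show ?thesis
    using inverse_le_Egamma_iff_no_gap[OF L alpha(1), of "\<lambda>i. s (X i)" \<gamma>]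
    unfolding risk_below_def by auto
qed

end
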